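(* Let $h\in A$ be of the form $h=\sum_{i=1}^n\frac{h_i}{de}\omega_i$ with $h_i,d\in K[x]$ such that $\gcd(d,e)=\gcd(h_1,\ldots,h_n,d)=1$ and $d$ squarefree. Let $U$ be an integral basis of $A$ and let $T\in K[x]^{n\times n}$ be such that $W=TU$. If $h$ is integrable in $A$, i.e., there exist $u\in K[x]$ and $q=(q_1,\ldots,q_n)\in K[x]^n$ such that \[h=\Big(\sum_{i=1}^n\frac{q_i}{u}\omega_i\Big)^\prime\] and $\gcd(q_1,\ldots,q_n,u)=1$, then $u$ divides $\det(T)$. Hence $u^2$ divides $\operatorname{Disc}(W)/\operatorname{Disc}(U)$.
   Context: Let $K$ be a field of characteristic zero, $m\in K[x,y]$ irreducible over $K(x)$ with $n=\deg_y(m)$, and $A=K(x)[y]/\langle m\rangle$, with the derivation $'$ with respect to $x$. An element $f\in A$ is (globally) integral if all its Puiseux series expansions at every finite point $a\in\bar K$ have nonnegative valuation; an integral basis of $A$ is a basis of the $K[x]$-module of integral elements of $A$. An element $f\in A$ is integrable in $A$ if $f=g'$ for some $g\in A$. Let $W=(\omega_1,\ldots,\omega_n)$ be a suitable basis of $A$: a $K(x)$-vector space basis of $A$ consisting of integral elements such that, for $e\in K[x]$ and $M=(m_{i,j})\in K[x]^{n\times n}$ with $eW'=MW$ and $\gcd(e,m_{1,1},m_{1,2},\ldots,m_{n,n})=1$, the polynomial $e$ is squarefree. (The form of $h$ in the claim is that of the remainder produced by lazy Hermite reduction with respect to $W$.) The discriminant of a tuple $W=(\omega_1,\ldots,\omega_n)$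 is $\operatorname{Disc}(W)=\det(\operatorname{Tr}(\omega_i\omega_j))$, where $\operatorname{Tr}$ is the trace map from $A$ to $K(x)$; for tuples of integral elements it is a polynomial in $K[x]$. *)

theory Defs
  imports "HOL-Computational_Algebra.Polynomial_Factorial"
          "HOL-Computational_Algebra.Normalized_Fraction"
          "HOL-Computational_Algebra.Formal_Laurent_Series"
          "HOL-Computational_Algebra.Squarefree"
          "HOL-Algebra.Algebraic_Closure_Type"
          "Jordan_Normal_Form.Determinant"
begin

text \<open>
  K is a type 'a of class field_char_0.  K[x] is 'a poly, K(x) is
  'a poly fract.  The defining polynomial m in K[x][y] is an element of
  'a poly poly (outer variable y).  The algebra A = K(x)[y]/(m) is represented by
  the reduced representatives, i.e. polynomials in y over K(x) of degree < deg_y m;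
  products and derivatives are reduced modulo m.  Tuples (omega_1,...,omega_n) are
  functions nat => A, used on indices 0..n-1.
\<close>

type_synonym 'a rfun = "'a poly fract"
type_synonym 'a alg = "'a poly fract poly"

definition modulus :: "'a::{field_char_0,field_gcd} poly poly \<Rightarrow> 'a alg" where
  "modulus m = map_poly to_fract m"

definition amul :: "'a::{field_char_0,field_gcd} poly poly \<Rightarrow> 'a alg \<Rightarrow> 'a alg \<Rightarrow> 'a alg" where
  "amul m f g = (f * g) mod modulus m"

definition rf_deriv :: "'a::{field_char_0,field_gcd} rfun \<Rightarrow> 'a rfun" where
  "rf_deriv z = (let (p, q) = quot_of_fract z in
      to_fract (pderiv p * q - p * pderiv q) / to_fract (q ^ 2))"

text \<open>The derivative y' of the generator y in A, determined by m(x,y) = 0.\<close>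
definition y_deriv :: "'a::{field_char_0,field_gcd} poly poly \<Rightarrow> 'a alg" where
  "y_deriv m = (SOME Y. degree Y < degree m \<and>
      (map_poly rf_deriv (modulus m) + pderiv (modulus m) * Y) mod modulus m = 0)"

definition A_deriv :: "'a::{field_char_0,field_gcd} poly poly \<Rightarrow> 'a alg \<Rightarrow> 'a alg" where
  "A_deriv m f = (map_poly rf_deriv f + pderiv f * y_deriv m) mod modulus m"

definition lincomb :: "'a::{field_char_0,field_gcd} poly poly \<Rightarrow> (nat \<Rightarrow> 'a rfun) \<Rightarrow> (nat \<Rightarrow> 'a alg) \<Rightarrow> 'a alg" where
  "lincomb m c w = (\<Sum>i<degree m. smult (c i) (w i))"

text \<open>Trace of the K(x)-linear map g |-> f g on A (computed in the power basis 1,y,...,y^(n-1)).\<close>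
definition A_trace :: "'a::{field_char_0,field_gcd} poly poly \<Rightarrow> 'a alg \<Rightarrow> 'a rfun" where
  "A_trace m f = (\<Sum>k<degree m. coeff ((f * monom 1 k) mod modulus m) k)"

definition Disc :: "'a::{field_char_0,field_gcd} poly poly \<Rightarrow> (nat \<Rightarrow> 'a alg) \<Rightarrow> 'a rfun" where
  "Disc m w = det (mat (degree m) (degree m) (\<lambda>(i, j). A_trace m (amul m (w i) (w j))))"

text \<open>Puiseux expansions at a finite point a of the algebraic closure of K:
  with ramification index r >= 1 and t^r = x - a, a Puiseux series in x - a is a
  formal Laurent series in t.\<close>
definition poly_at :: "'a::{field_char_0,field_gcd} alg_closure \<Rightarrow> nat \<Rightarrow> 'a poly \<Rightarrow> 'a alg_closure fls" where
  "poly_at a r p = poly (map_poly (\<lambda>c. fls_const (to_ac c)) p) (fls_const a + fls_X ^ r)"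

definition rf_at :: "'a::{field_char_0,field_gcd} alg_closure \<Rightarrow> nat \<Rightarrow> 'a rfun \<Rightarrow> 'a alg_closure fls" where
  "rf_at a r z = poly_at a r (fst (quot_of_fract z)) / poly_at a r (snd (quot_of_fract z))"

text \<open>f is (globally) integral: at every finite point a, every Puiseux series
  expansion of f (obtained by substituting a Puiseux series root Y of m) has
  nonnegative valuation.\<close>
definition integral :: "'a::{field_char_0,field_gcd} poly poly \<Rightarrow> 'a alg \<Rightarrow> bool" where
  "integral m f \<longleftrightarrow>
     (\<forall>a r Y. r \<ge> 1 \<longrightarrow> poly (map_poly (poly_at a r) m) Y = 0 \<longrightarrow>
        fls_subdegree (poly (map_poly (rf_at a r) f) Y) \<ge> 0)"

definition is_basis :: "'a::{field_char_0,field_gcd} poly poly \<Rightarrow> (nat \<Rightarrow> 'a alg) \<Rightarrow> bool" where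
  "is_basis m w \<longleftrightarrow>
     (\<forall>i<degree m. degree (w i) < degree m) \<and>
     (\<forall>c. lincomb m c w = 0 \<longrightarrow> (\<forall>i<degree m. c i = 0)) \<and>
     (\<forall>f. degree f < degree m \<longrightarrow> (\<exists>c. f = lincomb m c w))"

definition integral_basis :: "'a::{field_char_0,field_gcd} poly poly \<Rightarrow> (nat \<Rightarrow> 'a alg) \<Rightarrow> bool" where
  "integral_basis m u \<longleftrightarrow>
     (\<forall>i<degree m. degree (u i) < degree m \<and> integral m (u i)) \<and>
     (\<forall>c. lincomb m (\<lambda>i. to_fract (c i)) u = 0 \<longrightarrow> (\<forall>i<degree m. c i = 0)) \<and>
     (\<forall>f. degree f < degree m \<longrightarrow> integral m f \<longrightarrow>
          (\<exists>c. f = lincomb m (\<lambda>i. to_fract (c i)) u))"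

definition deriv_rel :: "'a::{field_char_0,field_gcd} poly poly \<Rightarrow> (nat \<Rightarrow> 'a alg) \<Rightarrow> 'a poly \<Rightarrow> (nat \<Rightarrow> nat \<Rightarrow> 'a poly) \<Rightarrow> bool" where
  "deriv_rel m w e M \<longleftrightarrow>
     (\<forall>i<degree m. smult (to_fract e) (A_deriv m (w i)) = lincomb m (\<lambda>j. to_fract (M i j)) w)"

definition suitable_basis :: "'a::{field_char_0,field_gcd} poly poly \<Rightarrow> (nat \<Rightarrow> 'a alg) \<Rightarrow> bool" where
  "suitable_basis m w \<longleftrightarrow>
     is_basis m w \<and> (\<forall>i<degree m. integral m (w i)) \<and>
     (\<forall>e M. deriv_rel m w e M \<longrightarrow>
        Gcd ({e} \<union> {M i j |i j. i < degree m \<and> j < degree m}) = 1 \<longrightarrow> squarefree e)"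

end

theory Submission
  imports Defs
    "Berlekamp_Zassenhaus.Poly_Mod"
begin

text \<open>
  Write \<open>h = g'\<close> with \<open>g = \<Sum> (q\<^sub>i / u) \<omega>\<^sub>i\<close>. First, \<open>g\<close> is integral: at a Puiseux point
  with ramification index \<open>r\<close> put \<open>x = a + t\<^sup>r\<close>. Since \<open>d e\<close> is squarefree and the \<open>\<omega>\<^sub>i\<close> are
  integral, the expansion of \<open>h\<close> has \<open>t\<close>-valuation at least \<open>-r\<close>; a pole of order \<open>k \<ge> 1\<close> of \<open>g\<close>
  would give \<open>g' = (dg/dt) / (r t\<^sup>r\<^sup>-\<^sup>1)\<close> a pole of order \<open>k + r\<close>. Hence \<open>g = \<Sum> c\<^sub>j U\<^sub>j\<close> with
  \<open>c\<^sub>j \<in> K[x]\<close>, and comparing coefficients in \<open>W = T U\<close> gives \<open>u c = q T\<close>. As \<open>gcd(u, q) = 1\<close>,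
  the adjugate of \<open>T\<close> shows \<open>u dvd det T\<close>. Finally \<open>Disc W = (det T)\<^sup>2 Disc U\<close>.
\<close>

instance alg_closure :: (field) field_gcd ..

lemma of_nat_eq_to_fract: "(of_nat n :: 'a::idom fract) = to_fract (of_nat n)"
  by (induction n) simp_all

instance fract :: ("{idom,ring_char_0}") field_char_0
  by standard (auto intro!: injI simp: of_nat_eq_to_fract)

lemma comm_ring_hom_poly_map_poly:
  assumes "comm_ring_hom f"
  shows "comm_ring_hom (\<lambda>p. poly (map_poly f p) y)"
proof -
  interpret map_poly_comm_ring_hom f by (rule map_poly_comm_ring_hom.intro) fact
  show ?thesis
    by unfold_locales (simp_all add: hom_add hom_mult)
qed

lemma comm_ring_hom_fls_const_to_ac:
  "comm_ring_hom (\<lambda>c. fls_const (to_ac c) :: 'a::field alg_closure fls)"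
proof
  fix x y :: 'a
  show "fls_const (to_ac (x + y)) = fls_const (to_ac x) + (fls_const (to_ac y) :: 'a alg_closure fls)"
    by (simp add: fls_plus_const)
qed simp_all

lemma fls_deriv_poly:
  fixes P :: "'a::idom fls poly"
  shows "fls_deriv (poly P Y) = poly (map_poly fls_deriv P) Y + poly (pderiv P) Y * fls_deriv Y"
  by (induction P) (simp_all add: map_poly_pCons pderiv_pCons algebra_simps)

lemma irreducible_bezout_pderiv:
  fixes M :: "'a::{field_char_0,field_gcd} poly"
  assumes "irreducible M"
  shows "\<exists>s t. s * M + t * pderiv M = 1"
proof -
  have "degree M \<noteq> 0"
    using assms by (metis irreducible_def is_unit_iff_degree)
  then have "pderiv M \<noteq> 0" "degree (pderiv M) < degree M"
    by (auto simp: pderiv_eq_0_iff degree_pderiv)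
  then have "\<not> M dvd pderiv M"
    by (metis dvd_imp_degree_le leD)
  then have "gcd M (pderiv M) = 1"
    using prime_elem_imp_coprime[OF irreducible_imp_prime_elem[OF assms]] by simp
  then show ?thesis
    using bezout_coefficients_fst_snd[of M "pderiv M"] by (intro exI) simp
qed

lemma squarefree_imp_square_free:
  fixes p :: "'a::field poly"
  assumes "squarefree p"
  shows "square_free p"
  unfolding square_free_def
proof (intro conjI allI impI notI)
  show "p = 0 \<Longrightarrow> False"
    using assms by simp
  fix q assume "0 < degree q" "q * q dvd p"
  then show False
    using assms squarefreeD[of p q] by (simp add: power2_eq_square is_unit_iff_degree)
qed

lemma squarefree_order_to_ac_le_1:
  fixes p :: "'a::{field_char_0,field_gcd} poly"
  assumes "squarefree p"
  shows "order a (map_poly to_ac p) \<le> 1"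
proof -
  interpret to_ac: field_hom_0' "to_ac :: 'a \<Rightarrow> 'a alg_closure"
    by unfold_locales simp_all
  have "rsquarefree (map_poly to_ac p)"
    using assms squarefree_imp_square_free to_ac.square_free_map_poly square_free_rsquarefree
    by blast
  then have "order a (map_poly to_ac p) = 0 \<or> order a (map_poly to_ac p) = 1"
    unfolding rsquarefree_def by blast
  then show ?thesis
    by linarith
qed

section \<open>Substituting a Puiseux point\<close>

lemma poly_at_hom: "comm_ring_hom (poly_at a r)"
  unfolding poly_at_def[abs_def]
  by (rule comm_ring_hom_poly_map_poly[OF comm_ring_hom_fls_const_to_ac])

lemma poly_fls_const_shift_eq_fps:
  "poly (map_poly fls_const Q) (fls_const a + fls_X ^ r) =
   fps_to_fls (poly (map_poly fps_const Q) (fps_const a + fps_X ^ r))"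
  by (induction Q) (simp_all add: fls_times_fps_to_fls fps_to_fls_power)

lemma fps_nth_0_poly_shift:
  "r \<ge> 1 \<Longrightarrow> fps_nth (poly (map_poly fps_const Q) (fps_const a + fps_X ^ r)) 0 = poly Q a"
  by (induction Q) simp_all

lemma poly_at_altdef:
  "poly_at a r p = poly (map_poly fls_const (map_poly to_ac p)) (fls_const a + fls_X ^ r)"
  unfolding poly_at_def by (simp add: map_poly_map_poly o_def)

lemma poly_at_eq_fps_to_fls:
  "poly_at a r p = fps_to_fls (poly (map_poly fps_const (map_poly to_ac p)) (fps_const a + fps_X ^ r))"
  unfolding poly_at_altdef poly_fls_const_shift_eq_fps ..

lemma poly_at_subdegree_nonneg: "fls_subdegree (poly_at a r p) \<ge> 0"
  unfolding poly_at_eq_fps_to_fls by (simp add: fls_subdegree_fls_to_fps_gt0)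

lemma poly_fls_const_shift_subdegree:
  fixes P :: "'b::field poly" and a :: 'b
  assumes r: "r \<ge> 1" and P: "P \<noteq> 0"
  defines "F \<equiv> poly (map_poly fls_const P) (fls_const a + fls_X ^ r)"
  shows "F \<noteq> 0" "fls_subdegree F = int (r * order a P)"
proof -
  interpret ev: comm_ring_hom "\<lambda>p. poly (map_poly fls_const p) (fls_const a + fls_X ^ r :: 'b fls)"
    by (rule comm_ring_hom_poly_map_poly) (unfold_locales, simp_all add: fls_plus_const)
  obtain Q where PQ: "P = [:- a, 1:] ^ order a P * Q" and "\<not> [:- a, 1:] dvd Q"
    using order_decomp[OF P] by blast
  then have "poly Q a \<noteq> 0"
    using poly_eq_0_iff_dvd by blast
  define G where "G = poly (map_poly fps_const Q) (fps_const a + fps_X ^ r)"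
  have "fps_nth G 0 = poly Q a"
    unfolding G_def by (rule fps_nth_0_poly_shift[OF r])
  then have "fps_nth G 0 \<noteq> 0"
    using \<open>poly Q a \<noteq> 0\<close> by simp
  then have G: "fps_to_fls G \<noteq> 0" "fls_subdegree (fps_to_fls G) = 0"
    by (auto simp: fls_subdegree_fls_to_fps subdegree_eq_0_iff)
  have "F = poly (map_poly fls_const [:- a, 1:]) (fls_const a + fls_X ^ r) ^ order a P *
             poly (map_poly fls_const Q) (fls_const a + fls_X ^ r)"
    unfolding F_def by (subst PQ) (simp only: ev.hom_mult ev.hom_power)
  also have "\<dots> = fls_X ^ (r * order a P) * fps_to_fls G"
    by (simp add: power_mult G_def poly_fls_const_shift_eq_fps)
  finally have F: "F = fls_X ^ (r * order a P) * fps_to_fls G" .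
  show "F \<noteq> 0" "fls_subdegree F = int (r * order a P)"
    using G unfolding F by simp_all
qed

lemma poly_at_subdegree:
  assumes "r \<ge> 1" and "p \<noteq> 0"
  shows "poly_at a r p \<noteq> 0" "fls_subdegree (poly_at a r p) = int (r * order a (map_poly to_ac p))"
proof -
  have "map_poly to_ac p \<noteq> 0"
    using assms(2) by (simp add: map_poly_eq_0_iff)
  then show "poly_at a r p \<noteq> 0" "fls_subdegree (poly_at a r p) = int (r * order a (map_poly to_ac p))"
    unfolding poly_at_altdef by (rule poly_fls_const_shift_subdegree[OF assms(1)])+
qed

lemma fract_as_quotient:
  "\<exists>p q. q \<noteq> 0 \<and> (z :: 'a::{field_char_0,field_gcd} poly fract) = to_fract p / to_fract q"
proof (intro exI conjI)
  show "snd (quot_of_fract z) \<noteq> 0"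
    by simp
  have "z = Fract (fst (quot_of_fract z)) (snd (quot_of_fract z))"
    by simp
  then show "z = to_fract (fst (quot_of_fract z)) / to_fract (snd (quot_of_fract z))"
    by (simp add: Fract_conv_to_fract)
qed

lemma rf_at_quotient:
  assumes r: "r \<ge> 1" and q: "q \<noteq> 0"
  shows "rf_at a r (to_fract p / to_fract q) = poly_at a r p / poly_at a r q"
proof -
  interpret poly_at: comm_ring_hom "poly_at a r" by (rule poly_at_hom)
  obtain p' q' where pq': "quot_of_fract (to_fract p / to_fract q) = (p', q')"
    by (cases "quot_of_fract (to_fract p / to_fract q)")
  then have "q' \<noteq> 0"
    using snd_quot_of_fract_nonzero[of "to_fract p / to_fract q"] by simp
  have "to_fract p / to_fract q = Fract p' q'"
    using Fract_quot_of_fract[of "to_fract p / to_fract q"] pq' by simp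
  then have "to_fract p / to_fract q = to_fract p' / to_fract q'"
    by (simp add: Fract_conv_to_fract)
  then have "p * q' = p' * q"
    using q \<open>q' \<noteq> 0\<close> by (simp add: frac_eq_eq flip: to_fract_mult)
  then have "poly_at a r p * poly_at a r q' = poly_at a r p' * poly_at a r q"
    by (metis poly_at.hom_mult)
  moreover have "poly_at a r q \<noteq> 0" "poly_at a r q' \<noteq> 0"
    using poly_at_subdegree(1)[OF r] q \<open>q' \<noteq> 0\<close> by blast+
  ultimately show ?thesis
    unfolding rf_at_def pq' by (simp add: frac_eq_eq)
qed

lemma rf_at_to_fract:
  assumes "r \<ge> 1"
  shows "rf_at a r (to_fract p) = poly_at a r p"
proof -
  interpret poly_at: comm_ring_hom "poly_at a r" by (rule poly_at_hom)
  show ?thesis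
    using rf_at_quotient[OF assms, of 1 a p] by simp
qed

lemma rf_at_hom:
  assumes r: "r \<ge> 1"
  shows "comm_ring_hom (rf_at a r)"
proof -
  interpret poly_at: comm_ring_hom "poly_at a r" by (rule poly_at_hom)
  have nz: "q \<noteq> 0 \<Longrightarrow> poly_at a r q \<noteq> 0" for q
    using poly_at_subdegree(1)[OF r] by blast
  have "rf_at a r (x + y) = rf_at a r x + rf_at a r y \<and> rf_at a r (x * y) = rf_at a r x * rf_at a r y"
    for x y
  proof -
    obtain p1 q1 where 1: "q1 \<noteq> 0" "x = to_fract p1 / to_fract q1" using fract_as_quotient by blast
    obtain p2 q2 where 2: "q2 \<noteq> 0" "y = to_fract p2 / to_fract q2" using fract_as_quotient by blast
    have sum: "x + y = to_fract (p1 * q2 + p2 * q1) / to_fract (q1 * q2)"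
      unfolding 1(2) 2(2) using 1(1) 2(1) by (simp add: add_frac_eq)
    have prod: "x * y = to_fract (p1 * p2) / to_fract (q1 * q2)"
      unfolding 1(2) 2(2) by simp
    have "rf_at a r (x + y) = poly_at a r (p1 * q2 + p2 * q1) / poly_at a r (q1 * q2)"
      unfolding sum by (rule rf_at_quotient[OF r]) (use 1 2 in simp)
    moreover have "rf_at a r (x * y) = poly_at a r (p1 * p2) / poly_at a r (q1 * q2)"
      unfolding prod by (rule rf_at_quotient[OF r]) (use 1 2 in simp)
    ultimately show ?thesis
      using 1 2 nz[OF 1(1)] nz[OF 2(1)]
      by (simp add: rf_at_quotient[OF r] poly_at.hom_add poly_at.hom_mult add_frac_eq)
  qed
  moreover have "rf_at a r 0 = 0" "rf_at a r 1 = 1"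
    using rf_at_to_fract[OF r, of a 0] rf_at_to_fract[OF r, of a 1] by simp_all
  ultimately show ?thesis
    by unfold_locales simp_all
qed

text \<open>With \<open>x = a + t\<^sup>r\<close>, differentiation in \<open>t\<close> is \<open>dx_dt r\<close> times differentiation in \<open>x\<close>.\<close>

definition dx_dt :: "nat \<Rightarrow> 'b::comm_ring_1 fls" where
  "dx_dt r = of_nat r * fls_X ^ (r - 1)"

lemma dx_dt_nonzero: "r \<ge> 1 \<Longrightarrow> dx_dt r \<noteq> (0 :: 'b::field_char_0 fls)"
  unfolding dx_dt_def by simp

lemma fls_subdegree_dx_dt: "r \<ge> 1 \<Longrightarrow> fls_subdegree (dx_dt r :: 'b::field_char_0 fls) = int r - 1"
  unfolding dx_dt_def by (simp add: of_nat_diff)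

lemma fls_deriv_poly_at: "fls_deriv (poly_at a r p) = dx_dt r * poly_at a r (pderiv p)"
proof -
  interpret c: idom_hom "\<lambda>c. fls_const (to_ac c) :: 'a alg_closure fls"
    by (rule idom_hom.intro) (rule comm_ring_hom_fls_const_to_ac)
  have "map_poly fls_deriv (map_poly (\<lambda>c. fls_const (to_ac c)) p) = 0"
    by (rule poly_eqI) (simp add: coeff_map_poly)
  then show ?thesis
    unfolding poly_at_def fls_deriv_poly c.map_poly_pderiv
    by (simp add: fls_deriv_X_power dx_dt_def)
qed

lemma fls_deriv_rf_at:
  assumes r: "r \<ge> 1"
  shows "fls_deriv (rf_at a r z) = dx_dt r * rf_at a r (rf_deriv z)"
proof -
  interpret poly_at: comm_ring_hom "poly_at a r" by (rule poly_at_hom)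
  obtain p q where pq: "quot_of_fract z = (p, q)" by (cases "quot_of_fract z")
  have "q \<noteq> 0"
    using snd_quot_of_fract_nonzero[of z] pq by simp
  define P Q P' Q' where "P = poly_at a r p" "Q = poly_at a r q"
    "P' = poly_at a r (pderiv p)" "Q' = poly_at a r (pderiv q)"
  have Q: "Q \<noteq> 0"
    using poly_at_subdegree(1)[OF r \<open>q \<noteq> 0\<close>] by (simp add: P_Q_P'_Q'_def)
  have z: "rf_at a r z = P / Q"
    unfolding rf_at_def pq P_Q_P'_Q'_def by simp
  have z': "rf_at a r (rf_deriv z) = (P' * Q - P * Q') / Q\<^sup>2"
    unfolding rf_deriv_def pq Let_def prod.case P_Q_P'_Q'_def
    by (subst rf_at_quotient[OF r]) (use \<open>q \<noteq> 0\<close> in \<open>simp_all add: poly_at.hom_mult poly_at.hom_minus poly_at.hom_power\<close>)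
  have "fls_deriv P = dx_dt r * P'" "fls_deriv Q = dx_dt r * Q'"
    unfolding P_Q_P'_Q'_def fls_deriv_poly_at by simp_all
  then have "fls_deriv (P / Q) = P * (- (dx_dt r * Q') * (inverse Q)\<^sup>2) + dx_dt r * P' * inverse Q"
    by (simp add: divide_inverse fls_inverse_deriv)
  also have "\<dots> = dx_dt r * ((P' * Q - P * Q') / Q\<^sup>2)"
    using Q by (simp add: field_simps power2_eq_square)
  finally show ?thesis
    unfolding z z' .
qed

section \<open>Puiseux expansions of elements of the function field\<close>

definition expansion :: "'a::{field_char_0,field_gcd} alg_closure \<Rightarrow> nat \<Rightarrow> 'a alg_closure fls \<Rightarrow> 'a alg \<Rightarrow> 'a alg_closure fls" where
  "expansion a r Y f = poly (map_poly (rf_at a r) f) Y"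

lemma expansion_hom: "r \<ge> 1 \<Longrightarrow> comm_ring_hom (expansion a r Y)"
  unfolding expansion_def[abs_def] by (rule comm_ring_hom_poly_map_poly[OF rf_at_hom])

lemma expansion_smult:
  assumes "r \<ge> 1"
  shows "expansion a r Y (smult c f) = rf_at a r c * expansion a r Y f"
proof -
  interpret rf_at: comm_ring_hom "rf_at a r" by (rule rf_at_hom[OF assms])
  show ?thesis
    by (simp add: expansion_def rf_at.map_poly_hom_smult)
qed

lemma expansion_modulus:
  assumes r: "r \<ge> 1"
  shows "expansion a r Y (modulus m) = poly (map_poly (poly_at a r) m) Y"
proof -
  interpret rf_at: comm_ring_hom "rf_at a r" by (rule rf_at_hom[OF r])
  interpret poly_at: comm_ring_hom "poly_at a r" by (rule poly_at_hom)
  have "map_poly (rf_at a r) (map_poly to_fract m) = map_poly (poly_at a r) m"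
    by (rule poly_eqI) (simp add: coeff_map_poly rf_at_to_fract[OF r])
  then show ?thesis
    unfolding expansion_def modulus_def by simp
qed

lemma rf_deriv_0 [simp]: "rf_deriv 0 = 0"
  by (simp add: rf_deriv_def)

lemma fls_deriv_expansion:
  assumes r: "r \<ge> 1"
  shows "fls_deriv (expansion a r Y f) =
    dx_dt r * expansion a r Y (map_poly rf_deriv f) + expansion a r Y (pderiv f) * fls_deriv Y"
proof -
  interpret rf_at: idom_hom "rf_at a r"
    by (rule idom_hom.intro) (rule rf_at_hom[OF r])
  have "map_poly fls_deriv (map_poly (rf_at a r) f) =
      smult (dx_dt r) (map_poly (rf_at a r) (map_poly rf_deriv f))"
    by (intro poly_eqI) (simp add: coeff_map_poly fls_deriv_rf_at[OF r])
  then show ?thesis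
    unfolding expansion_def fls_deriv_poly rf_at.map_poly_pderiv by simp
qed

lemma degree_modulus: "degree (modulus m) = degree m"
  unfolding modulus_def by (rule degree_map_poly) simp

lemma y_deriv_spec:
  assumes irred: "irreducible (modulus m)"
  shows "degree (y_deriv m) < degree m"
    "(map_poly rf_deriv (modulus m) + pderiv (modulus m) * y_deriv m) mod modulus m = 0"
proof -
  define M D where "M = modulus m" "D = map_poly rf_deriv (modulus m)"
  obtain s t where st: "s * M + t * pderiv M = 1"
    using irreducible_bezout_pderiv[OF irred] M_D_def by blast
  define Y' where "Y' = (- (t * D)) mod M"
  have "M \<noteq> 0" "degree M \<noteq> 0"
    using irred unfolding M_D_def by (auto simp: irreducible_def is_unit_iff_degree)
  then have deg: "degree Y' < degree M"
    unfolding Y'_def using degree_mod_less[of M "- (t * D)"] by auto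
  have "M dvd - (t * D) - Y'"
    unfolding Y'_def by (rule dvd_minus_mod)
  then obtain k where k: "- (t * D) - Y' = M * k" ..
  then have Y': "Y' = - (t * D) - M * k"
    by (simp add: algebra_simps)
  have "D + pderiv M * Y' = D * (s * M + t * pderiv M) - t * pderiv M * D - M * pderiv M * k"
    unfolding Y' by (simp only: st mult_1_right) (simp add: algebra_simps)
  also have "\<dots> = M * (D * s - pderiv M * k)"
    by (simp add: algebra_simps)
  finally have "M dvd D + pderiv M * Y'"
    by (rule dvdI)
  then have "(D + pderiv M * Y') mod M = 0"
    by (rule dvd_imp_mod_0)
  with deg have "\<exists>Y'. degree Y' < degree m \<and> (D + pderiv M * Y') mod M = 0"
    unfolding M_D_def degree_modulus by (intro exI conjI)
  then have "degree (y_deriv m) < degree m \<and>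
      (map_poly rf_deriv (modulus m) + pderiv (modulus m) * y_deriv m) mod modulus m = 0"
    unfolding y_deriv_def M_D_def by (rule someI_ex)
  then show "degree (y_deriv m) < degree m"
    "(map_poly rf_deriv (modulus m) + pderiv (modulus m) * y_deriv m) mod modulus m = 0"
    by simp_all
qed

context
  fixes m :: "'a::{field_char_0,field_gcd} poly poly" and a r Y
  assumes irred: "irreducible (modulus m)"
    and r: "r \<ge> 1"
    and root: "poly (map_poly (poly_at a r) m) Y = 0"
begin

lemma expansion_modulus_root: "expansion a r Y (modulus m) = 0"
  using expansion_modulus[OF r, of a Y m] root by simp

interpretation expansion: comm_ring_hom "expansion a r Y"
  by (rule expansion_hom[OF r])

lemma expansion_mod: "expansion a r Y (f mod modulus m) = expansion a r Y f"
proof -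
  have "expansion a r Y f = expansion a r Y (f div modulus m * modulus m + f mod modulus m)"
    by simp
  also have "\<dots> =
      expansion a r Y (f div modulus m) * expansion a r Y (modulus m) + expansion a r Y (f mod modulus m)"
    by (simp only: expansion.hom_add expansion.hom_mult)
  also have "\<dots> = expansion a r Y (f mod modulus m)"
    using expansion_modulus_root by simp
  finally show ?thesis
    by (rule sym)
qed

text \<open>
  Differentiate \<open>m(a + t\<^sup>r, Y) = 0\<close> and compare with the congruence defining \<open>y_deriv\<close>;
  \<open>\<partial>m/\<partial>y\<close> does not vanish at \<open>Y\<close> because it is coprime to the irreducible \<open>m\<close>.
\<close>

lemma fls_deriv_expansion_root: "fls_deriv Y = dx_dt r * expansion a r Y (y_deriv m)"
proof -
  define M where "M = modulus m"
  have M: "expansion a r Y M = 0"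
    using expansion_modulus_root by (simp add: M_def)
  obtain s t where "s * M + t * pderiv M = 1"
    using irreducible_bezout_pderiv[OF irred] M_def by blast
  then have "expansion a r Y s * expansion a r Y M + expansion a r Y t * expansion a r Y (pderiv M) = 1"
    by (simp flip: expansion.hom_add expansion.hom_mult)
  then have M': "expansion a r Y (pderiv M) \<noteq> 0"
    using M by auto
  have "expansion a r Y (map_poly rf_deriv M) + expansion a r Y (pderiv M) * expansion a r Y (y_deriv m) = 0"
    using expansion_mod[of "map_poly rf_deriv M + pderiv M * y_deriv m"] y_deriv_spec(2)[OF irred]
    by (simp add: M_def expansion.hom_add expansion.hom_mult)
  moreover have "dx_dt r * expansion a r Y (map_poly rf_deriv M) + expansion a r Y (pderiv M) * fls_deriv Y = 0"
    using fls_deriv_expansion[OF r, of a Y M] M by simp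
  moreover have "expansion a r Y (pderiv M) * (fls_deriv Y - dx_dt r * expansion a r Y (y_deriv m)) =
      (dx_dt r * expansion a r Y (map_poly rf_deriv M) + expansion a r Y (pderiv M) * fls_deriv Y) -
      dx_dt r * (expansion a r Y (map_poly rf_deriv M) +
        expansion a r Y (pderiv M) * expansion a r Y (y_deriv m))"
    by (simp add: algebra_simps)
  ultimately have "expansion a r Y (pderiv M) * (fls_deriv Y - dx_dt r * expansion a r Y (y_deriv m)) = 0"
    by simp
  then show ?thesis
    using M' by simp
qed

lemma fls_deriv_expansion_A_deriv: "fls_deriv (expansion a r Y f) = dx_dt r * expansion a r Y (A_deriv m f)"
  unfolding A_deriv_def expansion_mod fls_deriv_expansion[OF r] fls_deriv_expansion_root
  by (simp add: expansion.hom_add expansion.hom_mult algebra_simps)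

end

section \<open>Antiderivatives with squarefree denominators are integral\<close>

lemma fls_subdegree_sum_nonneg:
  fixes f :: "'i \<Rightarrow> 'b::comm_monoid_add fls"
  assumes "\<And>i. i \<in> A \<Longrightarrow> fls_subdegree (f i) \<ge> 0"
  shows "fls_subdegree (sum f A) \<ge> 0"
  using assms
proof (induction A rule: infinite_finite_induct)
  case (insert i A)
  then have "fls_subdegree (f i) \<ge> 0" "fls_subdegree (sum f A) \<ge> 0"
    by simp_all
  then show ?case
    using insert.hyps by (intro fls_subdegree_ge0I) (simp add: fls_eq0_below_subdegree)
qed simp_all

lemma fls_subdegree_nonneg_if_deriv_bounded:
  fixes G H :: "'b::field_char_0 fls"
  assumes r: "r \<ge> 1" and deriv: "fls_deriv G = dx_dt r * H" and H: "fls_subdegree H \<ge> - int r"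
  shows "fls_subdegree G \<ge> 0"
proof (rule ccontr)
  assume "\<not> fls_subdegree G \<ge> 0"
  then have G: "fls_subdegree (fls_deriv G) = fls_subdegree G - 1" "fls_subdegree G < 0"
    by (simp_all add: fls_subdegree_deriv)
  then have "fls_deriv G \<noteq> 0"
    by auto
  then have "H \<noteq> 0"
    using deriv by auto
  then have "fls_subdegree (fls_deriv G) = fls_subdegree (dx_dt r :: 'b fls) + fls_subdegree H"
    unfolding deriv by (rule fls_subdegree_mult[OF dx_dt_nonzero[OF r]])
  then show False
    using G H fls_subdegree_dx_dt[OF r, where 'b='b] by linarith
qed

lemma expansion_subdegree_squarefree_denominator:
  fixes m :: "'a::{field_char_0,field_gcd} poly poly"
  assumes r: "r \<ge> 1" and root: "poly (map_poly (poly_at a r) m) Y = 0"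
    and W: "\<forall>i<degree m. integral m (W i)" and D: "squarefree D"
  shows "fls_subdegree (expansion a r Y (lincomb m (\<lambda>i. to_fract (hh i) / to_fract D) W)) \<ge> - int r"
proof -
  interpret expansion: comm_ring_hom "expansion a r Y" by (rule expansion_hom[OF r])
  have "D \<noteq> 0"
    using D by auto
  define P where "P = poly_at a r D"
  have "P \<noteq> 0"
    unfolding P_def by (rule poly_at_subdegree(1)[OF r \<open>D \<noteq> 0\<close>])
  have "fls_subdegree P = int (r * order a (map_poly to_ac D))"
    unfolding P_def by (rule poly_at_subdegree(2)[OF r \<open>D \<noteq> 0\<close>])
  also have "\<dots> \<le> int r"
    using mult_le_mono2[OF squarefree_order_to_ac_le_1[OF D], of r a]
    by (simp only: of_nat_le_iff mult_1_right)
  finally have "fls_subdegree P \<le> int r" .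
  define S where "S = (\<Sum>i<degree m. poly_at a r (hh i) * expansion a r Y (W i))"
  have "fls_subdegree (expansion a r Y (W i)) \<ge> 0" if "i < degree m" for i
    using W that r root unfolding integral_def expansion_def by blast
  then have S: "fls_subdegree S \<ge> 0"
    unfolding S_def
    by (intro fls_subdegree_sum_nonneg fls_mult_subdegree_ge_0) (auto simp: poly_at_subdegree_nonneg)
  have "expansion a r Y (lincomb m (\<lambda>i. to_fract (hh i) / to_fract D) W) = S / P"
    unfolding lincomb_def expansion.hom_sum expansion_smult[OF r] rf_at_quotient[OF r \<open>D \<noteq> 0\<close>]
      S_def P_def
    by (simp add: sum_divide_distrib)
  then show ?thesis
    using S \<open>P \<noteq> 0\<close> \<open>fls_subdegree P \<le> int r\<close>
    by (cases "S = 0") (simp_all add: fls_divide_subdegree)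
qed

lemma integral_if_deriv_squarefree_denominator:
  fixes m :: "'a::{field_char_0,field_gcd} poly poly"
  assumes irred: "irreducible (modulus m)"
    and W: "\<forall>i<degree m. integral m (W i)" and D: "squarefree D"
    and deriv: "A_deriv m g = lincomb m (\<lambda>i. to_fract (hh i) / to_fract D) W"
  shows "integral m g"
  unfolding integral_def
proof (intro allI impI)
  fix a r Y
  assume r: "r \<ge> 1" and root: "poly (map_poly (poly_at a r) m) Y = 0"
  have "fls_subdegree (expansion a r Y g) \<ge> 0"
    using fls_deriv_expansion_A_deriv[OF irred r root, of g]
      expansion_subdegree_squarefree_denominator[OF r root W D, of hh]
    by (intro fls_subdegree_nonneg_if_deriv_bounded[OF r]) (simp_all add: deriv)
  then show "fls_subdegree (poly (map_poly (rf_at a r) g) Y) \<ge> 0"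
    by (simp add: expansion_def)
qed

section \<open>Integral elements and the change of basis matrix\<close>

lemma degree_lincomb_less:
  assumes "\<forall>i<degree m. degree (w i) < degree m" and "degree m \<ge> 1"
  shows "degree (lincomb m c w) < degree m"
proof -
  have "degree (lincomb m c w) \<le> degree m - 1"
    unfolding lincomb_def
  proof (rule degree_sum_le)
    fix i assume "i \<in> {..<degree m}"
    then have "degree (w i) \<le> degree m - 1"
      using assms by auto
    then show "degree (smult (c i) (w i)) \<le> degree m - 1"
      using degree_smult_le order_trans by blast
  qed simp
  then show ?thesis
    using assms(2) by linarith
qed

lemma lincomb_diff: "lincomb m (\<lambda>i. c i - c' i) w = lincomb m c w - lincomb m c' w"
  unfolding lincomb_def by (simp add: smult_diff_left sum_subtractf)

lemma lincomb_smult: "smult a (lincomb m c w) = lincomb m (\<lambda>i. a * c i) w"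
  unfolding lincomb_def by (simp add: smult_sum2)

lemma lincomb_change_of_basis:
  assumes "\<forall>i<degree m. W i = lincomb m (B i) U"
  shows "lincomb m x W = lincomb m (\<lambda>j. \<Sum>i<degree m. x i * B i j) U"
proof -
  have "lincomb m x W = (\<Sum>i<degree m. smult (x i) (lincomb m (B i) U))"
    unfolding lincomb_def[of m x W] using assms by (intro sum.cong) auto
  also have "\<dots> = (\<Sum>i<degree m. \<Sum>j<degree m. smult (x i * B i j) (U j))"
    unfolding lincomb_def by (simp add: smult_sum2)
  also have "\<dots> = (\<Sum>j<degree m. \<Sum>i<degree m. smult (x i * B i j) (U j))"
    by (rule sum.swap)
  also have "\<dots> = lincomb m (\<lambda>j. \<Sum>i<degree m. x i * B i j) U"
    unfolding lincomb_def by (simp add: smult_sum)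
  finally show ?thesis .
qed

text \<open>Independence over \<open>K[x]\<close> gives independence over \<open>K(x)\<close> by clearing denominators.\<close>

lemma integral_basis_lincomb_eq_0:
  fixes m :: "'a::{field_char_0,field_gcd} poly poly"
  assumes U: "integral_basis m U" and c: "lincomb m c U = 0" and i: "i < degree m"
  shows "c i = 0"
proof -
  define num den where "num j = fst (quot_of_fract (c j))" "den j = snd (quot_of_fract (c j))" for j
  define D where "D = (\<Prod>j<degree m. den j)"
  have den: "den j \<noteq> 0" for j
    by (simp add: num_den_def)
  then have "D \<noteq> 0"
    by (simp add: D_def)
  have "c j = Fract (num j) (den j)" for j
    by (simp add: num_den_def)
  then have c_eq: "c j = to_fract (num j) / to_fract (den j)" for j
    by (simp add: Fract_conv_to_fract)
  define b where "b j = num j * (D div den j)" for j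
  have b: "to_fract D * c j = to_fract (b j)" if "j < degree m" for j
  proof -
    have "den j dvd D"
      unfolding D_def using that by (intro dvd_prodI) auto
    then have "to_fract D = to_fract (den j) * to_fract (D div den j)"
      by (simp flip: to_fract_mult)
    then show ?thesis
      unfolding c_eq b_def using den[of j] by simp
  qed
  have "lincomb m (\<lambda>j. to_fract (b j)) U = smult (to_fract D) (lincomb m c U)"
    unfolding lincomb_smult unfolding lincomb_def by (intro sum.cong) (simp_all add: b)
  then have "b i = 0"
    using U c i unfolding integral_basis_def by auto
  then show ?thesis
    using b[OF i] \<open>D \<noteq> 0\<close> by simp
qed

text \<open>Multiplying \<open>q T\<close> by the adjugate of \<open>T\<close> shows \<open>u dvd q\<^sub>k det T\<close> for every \<open>k\<close>.\<close>

lemma dvd_det_if_dvd_row_combination: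
  fixes u :: "'a::{idom,semiring_Gcd}"
  assumes dvd: "\<forall>j<n. u dvd (\<Sum>i<n. q i * T i j)"
    and coprime: "Gcd ({u} \<union> q ` {..<n}) = 1"
  shows "u dvd det (mat n n (\<lambda>(i, j). T i j))"
proof -
  define A where "A = mat n n (\<lambda>(i, j). T i j)"
  have A: "A \<in> carrier_mat n n"
    by (simp add: A_def)
  have "u dvd q k * det A" if k: "k < n" for k
  proof -
    have "q k * det A = (\<Sum>i<n. q i * (A * adj_mat A) $$ (i, k))"
      using adj_mat(2)[OF A] k by (simp add: if_distrib cong: if_cong)
    also have "\<dots> = (\<Sum>i<n. \<Sum>j<n. q i * T i j * adj_mat A $$ (j, k))"
      using A k adj_mat(1)[OF A]
      by (simp add: scalar_prod_def A_def lessThan_atLeast0 sum_distrib_left mult.assoc)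
    also have "\<dots> = (\<Sum>j<n. (\<Sum>i<n. q i * T i j) * adj_mat A $$ (j, k))"
      by (subst sum.swap) (simp add: sum_distrib_right)
    also have "u dvd \<dots>"
      using dvd by (intro dvd_sum) simp
    finally show ?thesis .
  qed
  then have "u dvd Gcd ((*) (det A) ` ({u} \<union> q ` {..<n}))"
    by (intro Gcd_greatest) (auto simp: mult.commute)
  also have "\<dots> = normalize (det A)"
    unfolding Gcd_mult coprime by simp
  finally show ?thesis
    unfolding A_def by (simp only: dvd_normalize_iff)
qed

lemma denominator_dvd_det_change_of_basis:
  fixes m :: "'a::{field_char_0,field_gcd} poly poly"
  assumes U: "integral_basis m U"
    and WTU: "\<forall>i<degree m. W i = lincomb m (\<lambda>j. to_fract (T i j)) U"
    and u: "u \<noteq> 0" and coprime: "Gcd ({u} \<union> q ` {..<degree m}) = 1"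
    and g: "g = lincomb m (\<lambda>i. to_fract (q i) / to_fract u) W"
    and int: "integral m g" and deg: "degree g < degree m"
  shows "u dvd det (mat (degree m) (degree m) (\<lambda>(i, j). T i j))"
proof -
  obtain c where c: "g = lincomb m (\<lambda>i. to_fract (c i)) U"
    using U[unfolded integral_basis_def, THEN conjunct2, THEN conjunct2, rule_format, OF deg int] ..
  have "u dvd (\<Sum>i<degree m. q i * T i j)" if j: "j < degree m" for j
  proof -
    have "g = lincomb m (\<lambda>j. \<Sum>i<degree m. to_fract (q i) / to_fract u * to_fract (T i j)) U"
      unfolding g by (rule lincomb_change_of_basis[OF WTU])
    with c have "lincomb m (\<lambda>j. to_fract (c j) - (\<Sum>i<degree m. to_fract (q i) / to_fract u * to_fract (T i j))) U = 0"
      unfolding lincomb_diff by simp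
    then have "to_fract (c j) - (\<Sum>i<degree m. to_fract (q i) / to_fract u * to_fract (T i j)) = 0"
      by (rule integral_basis_lincomb_eq_0[OF U _ j])
    then have "to_fract (c j) = (\<Sum>i<degree m. to_fract (q i) / to_fract u * to_fract (T i j))"
      by simp
    then have "to_fract (u * c j) = to_fract (\<Sum>i<degree m. q i * T i j)"
      using u by (simp add: sum_distrib_left)
    then have "u * c j = (\<Sum>i<degree m. q i * T i j)"
      by (simp only: to_fract_eq_iff)
    then show "u dvd (\<Sum>i<degree m. q i * T i j)"
      by (rule dvdI[OF sym])
  qed
  then show ?thesis
    using dvd_det_if_dvd_row_combination[OF _ coprime] by blast
qed

section \<open>Discriminants under a change of basis\<close>

lemma A_trace_add: "A_trace m (f + g) = A_trace m f + A_trace m g"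
  unfolding A_trace_def by (simp add: distrib_right poly_mod_add_left sum.distrib)

lemma A_trace_smult: "A_trace m (smult c f) = c * A_trace m f"
  unfolding A_trace_def by (simp add: mod_smult_left sum_distrib_left)

lemma A_trace_sum: "A_trace m (sum f S) = (\<Sum>i\<in>S. A_trace m (f i))"
  by (induction S rule: infinite_finite_induct) (simp_all add: A_trace_add A_trace_def[of m 0])

lemma A_trace_amul: "A_trace m (amul m f g) = A_trace m (f * g)"
  unfolding A_trace_def amul_def by (simp add: mod_mult_left_eq)

lemma A_trace_lincomb_mult:
  "A_trace m (lincomb m a U * lincomb m b U) =
   (\<Sum>k<degree m. \<Sum>l<degree m. a k * b l * A_trace m (U k * U l))"
proof -
  have "lincomb m a U * lincomb m b U = (\<Sum>k<degree m. \<Sum>l<degree m. smult (a k * b l) (U k * U l))"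
    unfolding lincomb_def sum_product
    by (intro sum.cong refl) (simp add: mult_smult_left mult_smult_right mult.commute)
  then show ?thesis
    by (simp add: A_trace_sum A_trace_smult)
qed

definition trace_matrix :: "'a::{field_char_0,field_gcd} poly poly \<Rightarrow> (nat \<Rightarrow> 'a alg) \<Rightarrow> 'a rfun mat" where
  "trace_matrix m w = mat (degree m) (degree m) (\<lambda>(i, j). A_trace m (amul m (w i) (w j)))"

lemma trace_matrix_change_of_basis:
  fixes m :: "'a::{field_char_0,field_gcd} poly poly"
  assumes WTU: "\<forall>i<degree m. W i = lincomb m (\<lambda>j. T i j) U"
  defines "T' \<equiv> mat (degree m) (degree m) (\<lambda>(i, j). T i j)"
  shows "trace_matrix m W = T' * trace_matrix m U * transpose_mat T'"
proof (rule eq_matI)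
  fix i j assume "i < dim_row (T' * trace_matrix m U * transpose_mat T')"
    "j < dim_col (T' * trace_matrix m U * transpose_mat T')"
  then have i: "i < degree m" and j: "j < degree m"
    by (simp_all add: T'_def)
  have "(T' * trace_matrix m U * transpose_mat T') $$ (i, j) =
      (\<Sum>l<degree m. (\<Sum>k<degree m. T i k * A_trace m (U k * U l)) * T j l)"
    using i j by (simp add: T'_def trace_matrix_def scalar_prod_def lessThan_atLeast0 A_trace_amul)
  also have "\<dots> = (\<Sum>k<degree m. \<Sum>l<degree m. T i k * T j l * A_trace m (U k * U l))"
    by (subst sum.swap) (simp add: sum_distrib_right sum_distrib_left mult_ac)
  also have "\<dots> = trace_matrix m W $$ (i, j)"
    using WTU i j by (simp add: trace_matrix_def A_trace_amul A_trace_lincomb_mult)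
  finally show "trace_matrix m W $$ (i, j) = (T' * trace_matrix m U * transpose_mat T') $$ (i, j)" ..
qed (simp_all add: T'_def trace_matrix_def)

lemma Disc_change_of_basis:
  fixes m :: "'a::{field_char_0,field_gcd} poly poly"
  assumes WTU: "\<forall>i<degree m. W i = lincomb m (\<lambda>j. to_fract (T i j)) U"
  shows "Disc m W = (to_fract (det (mat (degree m) (degree m) (\<lambda>(i, j). T i j))))\<^sup>2 * Disc m U"
proof -
  interpret to_fract: inj_comm_ring_hom "to_fract :: 'a poly \<Rightarrow> 'a poly fract"
    by unfold_locales auto
  define T' where "T' = mat (degree m) (degree m) (\<lambda>(i, j). to_fract (T i j))"
  have carrier: "T' \<in> carrier_mat (degree m) (degree m)"
    "trace_matrix m U \<in> carrier_mat (degree m) (degree m)"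
    by (simp_all add: T'_def trace_matrix_def)
  have "T' = map_mat to_fract (mat (degree m) (degree m) (\<lambda>(i, j). T i j))"
    by (auto simp: T'_def)
  then have det_T': "det T' = to_fract (det (mat (degree m) (degree m) (\<lambda>(i, j). T i j)))"
    by simp
  have "Disc m W = det (T' * trace_matrix m U * transpose_mat T')"
    using trace_matrix_change_of_basis[of m W "\<lambda>i j. to_fract (T i j)" U] WTU
    by (simp add: Disc_def trace_matrix_def[symmetric] T'_def)
  also have "\<dots> = det T' * Disc m U * det T'"
    using carrier by (simp add: det_mult det_transpose Disc_def trace_matrix_def[symmetric])
  finally show ?thesis
    by (simp add: det_T' power2_eq_square algebra_simps)
qed

lemma Disc_quotient_multiple_of_square:
  fixes m :: "'a::{field_char_0,field_gcd} poly poly"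
  assumes WTU: "\<forall>i<degree m. W i = lincomb m (\<lambda>j. to_fract (T i j)) U"
    and dvd: "u dvd det (mat (degree m) (degree m) (\<lambda>(i, j). T i j))"
  shows "\<exists>p. Disc m W / Disc m U = to_fract (u ^ 2 * p)"
proof (cases "Disc m U = 0")
  case False
  obtain k where det: "det (mat (degree m) (degree m) (\<lambda>(i, j). T i j)) = u * k"
    using dvd ..
  show ?thesis
    unfolding Disc_change_of_basis[OF WTU] det using False
    by (intro exI[of _ "k ^ 2"]) (simp add: power2_eq_square)
qed (intro exI[of _ 0], simp)

theorem lemma6:
  fixes m :: "'a::{field_char_0,field_gcd} poly poly"
    and W U :: "nat \<Rightarrow> 'a alg"
    and e d :: "'a poly"
    and M T :: "nat \<Rightarrow> nat \<Rightarrow> 'a poly"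
    and hh :: "nat \<Rightarrow> 'a poly"
    and h :: "'a alg"
  assumes irred: "irreducible (modulus m)"
    and suit: "suitable_basis m W"
    and eM: "deriv_rel m W e M"
    and eM_gcd: "Gcd ({e} \<union> {M i j |i j. i < degree m \<and> j < degree m}) = 1"
    and d_nz: "d \<noteq> 0"
    and gcd_de: "gcd d e = 1"
    and gcd_hd: "Gcd ({d} \<union> hh ` {..<degree m}) = 1"
    and sqf_d: "squarefree d"
    and h_def: "h = lincomb m (\<lambda>i. to_fract (hh i) / to_fract (d * e)) W"
    and U_ib: "integral_basis m U"
    and WTU: "\<forall>i<degree m. W i = lincomb m (\<lambda>j. to_fract (T i j)) U"
  shows "\<forall>u q. u \<noteq> 0 \<longrightarrow> Gcd ({u} \<union> q ` {..<degree m}) = 1 \<longrightarrow>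
            h = A_deriv m (lincomb m (\<lambda>i. to_fract (q i) / to_fract u) W) \<longrightarrow>
            u dvd det (mat (degree m) (degree m) (\<lambda>(i, j). T i j)) \<and>
            (\<exists>p. Disc m W / Disc m U = to_fract (u ^ 2 * p))"
proof (intro allI impI)
  fix u :: "'a poly" and q :: "nat \<Rightarrow> 'a poly"
  assume u: "u \<noteq> 0" and coprime: "Gcd ({u} \<union> q ` {..<degree m}) = 1"
    and h_deriv: "h = A_deriv m (lincomb m (\<lambda>i. to_fract (q i) / to_fract u) W)"
  define g where "g = lincomb m (\<lambda>i. to_fract (q i) / to_fract u) W"
  have W: "is_basis m W" "\<forall>i<degree m. integral m (W i)" and "squarefree e"
    using suit eM eM_gcd unfolding suitable_basis_def by blast+
  then have "squarefree (d * e)"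
    using sqf_d gcd_de by (simp add: squarefree_mult_coprime coprime_iff_gcd_eq_1)
  then have "integral m g"
    using integral_if_deriv_squarefree_denominator[OF irred W(2)] h_def h_deriv by (simp add: g_def)
  moreover have "degree g < degree m"
    using W(1) irred unfolding g_def is_basis_def
    by (intro degree_lincomb_less) (auto simp: irreducible_def is_unit_iff_degree degree_modulus)
  ultimately have dvd: "u dvd det (mat (degree m) (degree m) (\<lambda>(i, j). T i j))"
    by (rule denominator_dvd_det_change_of_basis[OF U_ib WTU u coprime g_def])
  then show "u dvd det (mat (degree m) (degree m) (\<lambda>(i, j). T i j)) \<and>
      (\<exists>p. Disc m W / Disc m U = to_fract (u ^ 2 * p))"
    using Disc_quotient_multiple_of_square[OF WTU dvd] ..
qed

end
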